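(* Let $\epsilon\in(0,1)$. Let $G=(V,E)$ be a graph with minimum degree at least $2$ having a vertex of degree at least $3$, let $R\subseteq V$ and $k,\ell\ge 0$. Define $\omega(v)=\deg(v)-2$ for $v\notin R$ and $\omega(v)=0$ for $v\in R$, and sample a vertex $v\in V$ with probability $\omega(v)/\omega(V)$. If there exists a riafd-set $F$ of $G$ of size $k$ with $\deg(F)\ge \frac{4-2\epsilon}{1-\epsilon}(k+\ell)$, then the sampled vertex belongs to $F$ with probability at least $\frac{1}{3-\epsilon}$.
   Context: For $X\subseteq V$, $\deg(X)=\sum_{v\in X}\deg(v)$ and $\omega(X)=\sum_{v\in X}\omega(v)$. A graph is an $\ell$-forest if deleting at most $\ell$ of its edges yields a forest. Given $G$, $R$ and $\ell$, a riafd-set is a set $F\subseteq V\setminus R$ that is independent in $G$ and such that $G-F$ is an $\ell$-forest. *)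

theory Defs
  imports Complex_Main
begin

definition graph :: "'a set \<Rightarrow> 'a set set \<Rightarrow> bool" where
  "graph V E \<longleftrightarrow> finite V \<and> (\<forall>e\<in>E. e \<subseteq> V \<and> card e = 2)"

definition deg :: "'a set set \<Rightarrow> 'a \<Rightarrow> nat" where
  "deg E v = card {e \<in> E. v \<in> e}"

definition is_cycle :: "'a set \<Rightarrow> 'a set set \<Rightarrow> 'a list \<Rightarrow> bool" where
  "is_cycle V E cs \<longleftrightarrow> length cs \<ge> 3 \<and> distinct cs \<and> set cs \<subseteq> V \<and>
     (\<forall>i < length cs. {cs ! i, cs ! ((i + 1) mod length cs)} \<in> E)"

definition forest :: "'a set \<Rightarrow> 'a set set \<Rightarrow> bool" where
  "forest V E \<longleftrightarrow> \<not> (\<exists>cs. is_cycle V E cs)"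

definition l_forest :: "nat \<Rightarrow> 'a set \<Rightarrow> 'a set set \<Rightarrow> bool" where
  "l_forest l V E \<longleftrightarrow> (\<exists>D \<subseteq> E. card D \<le> l \<and> forest V (E - D))"

definition del_verts_E :: "'a set set \<Rightarrow> 'a set \<Rightarrow> 'a set set" where
  "del_verts_E E F = {e \<in> E. e \<inter> F = {}}"

definition independent :: "'a set set \<Rightarrow> 'a set \<Rightarrow> bool" where
  "independent E F \<longleftrightarrow> (\<forall>e\<in>E. \<not> e \<subseteq> F)"

definition riafd_set :: "'a set \<Rightarrow> 'a set set \<Rightarrow> 'a set \<Rightarrow> nat \<Rightarrow> 'a set \<Rightarrow> bool" where
  "riafd_set V E R l F \<longleftrightarrow> F \<subseteq> V - R \<and> independent E F \<and>
     l_forest l (V - F) (del_verts_E E F)"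

definition omega :: "'a set set \<Rightarrow> 'a set \<Rightarrow> 'a \<Rightarrow> real" where
  "omega E R v = (if v \<in> R then 0 else real (deg E v) - 2)"

end

theory Submission
  imports Defs
begin

(* Let d = deg(F) and k = |F|. At most d edges meet F, and G - F is an l-forest on |V| - k
   vertices, hence has at most |V| - k + l edges; so |E| <= |V| - k + l + d. By the handshake
   lemma omega(V) <= 2|E| - 2|V| <= 2d - 2k + 2l, while omega(F) = d - 2k since F avoids R.
   The hypothesis (1 - eps) d >= (4 - 2 eps)(k + l) turns this into
   omega(V) <= (3 - eps) omega(F) with omega(F) > 0. Positivity needs k > 0: otherwise also
   l = 0 and G itself would be a forest, but closing up a longest path shows that a graph of
   minimum degree 2 with an edge has a cycle. *)

definition is_path :: "'a set \<Rightarrow> 'a set set \<Rightarrow> 'a list \<Rightarrow> bool" where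
  "is_path V E p \<longleftrightarrow>
     distinct p \<and> set p \<subseteq> V \<and> (\<forall>i. Suc i < length p \<longrightarrow> {p ! i, p ! Suc i} \<in> E)"

lemma graph_finite_edges: "graph V E \<Longrightarrow> finite E"
  unfolding graph_def by (meson Pow_iff finite_Pow_iff rev_finite_subset subsetI)

lemma graph_edge_other_end:
  assumes "graph V E" "e \<in> E" "x \<in> e"
  obtains y where "y \<noteq> x" "e = {x, y}" "y \<in> V"
proof -
  have "card e = 2" "e \<subseteq> V" using assms unfolding graph_def by auto
  then obtain a b where "a \<noteq> b" "e = {a, b}" by (meson card_2_iff)
  have "x = a \<or> x = b" using assms(3) \<open>e = {a, b}\<close> by blast
  then show ?thesis
    using that[of b] that[of a] \<open>a \<noteq> b\<close> \<open>e = {a, b}\<close> \<open>e \<subseteq> V\<close> by (auto simp: insert_commute)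
qed

lemma two_le_deg_other_edge:
  assumes "2 \<le> deg E x"
  obtains e where "e \<in> E" "x \<in> e" "e \<noteq> e\<^sub>0"
proof -
  have "\<not> card {e \<in> E. x \<in> e} \<le> Suc 0" using assms unfolding deg_def by simp
  moreover have "finite {e \<in> E. x \<in> e}"
    using assms unfolding deg_def by (simp add: card_ge_0_finite)
  ultimately obtain a b where "a \<in> E" "x \<in> a" "b \<in> E" "x \<in> b" "a \<noteq> b"
    by (auto simp: card_le_Suc0_iff_eq)
  then show ?thesis using that by blast
qed

lemma is_path_length_le: "graph V E \<Longrightarrow> is_path V E p \<Longrightarrow> length p \<le> card V"
  unfolding graph_def is_path_def by (metis card_mono distinct_card)

lemma is_path_Cons:
  assumes "is_path V E p" "p \<noteq> []" "y \<in> V" "y \<notin> set p" "{y, hd p} \<in> E"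
  shows "is_path V E (y # p)"
  using assms unfolding is_path_def by (auto simp: nth_Cons hd_conv_nth split: nat.split)

lemma is_path_chord_cycle:
  assumes p: "is_path V E p" and j: "2 \<le> j" "j < length p" and chord: "{p ! j, p ! 0} \<in> E"
  shows "is_cycle V E (take (Suc j) p)"
  unfolding is_cycle_def
proof (intro conjI allI impI)
  let ?cs = "take (Suc j) p"
  have len: "length ?cs = Suc j" using j by simp
  show "3 \<le> length ?cs" "distinct ?cs" "set ?cs \<subseteq> V"
    using len j p set_take_subset unfolding is_path_def by fastforce+
  fix i assume "i < length ?cs"
  then consider "i = j" | "i < j" using len by linarith
  then show "{?cs ! i, ?cs ! ((i + 1) mod length ?cs)} \<in> E"
    by cases (use len chord p j in \<open>auto simp: is_path_def\<close>)
qed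

lemma exists_longest_path:
  assumes g: "graph V E" and "E \<noteq> {}"
  obtains p where "is_path V E p" "2 \<le> length p" "\<And>q. is_path V E q \<Longrightarrow> length q \<le> length p"
proof -
  obtain a b where "{a, b} \<in> E" "a \<noteq> b" "a \<in> V" "b \<in> V"
    using assms unfolding graph_def by (metis card_2_iff ex_in_conv insert_subset)
  then have ab: "is_path V E [a, b]" unfolding is_path_def by (auto simp: nth_Cons split: nat.split)
  have "\<forall>p. is_path V E p \<longrightarrow> length p < card V + 1"
    using is_path_length_le[OF g] by (simp add: le_imp_less_Suc)
  then obtain p where "is_path V E p" "\<forall>q. is_path V E q \<longrightarrow> length q \<le> length p"
    using ex_has_greatest_nat[of "is_path V E", OF ab] by blast
  with ab that show ?thesis by fastforce
qed

text \<open>The first vertex of a longest path has a second neighbour, which must lie on the path.\<close>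

lemma min_degree_2_has_cycle:
  assumes g: "graph V E" and mindeg: "\<forall>v\<in>V. 2 \<le> deg E v" and "E \<noteq> {}"
  shows "\<exists>cs. is_cycle V E cs"
proof -
  obtain p where p: "is_path V E p" and len: "2 \<le> length p"
    and longest: "\<And>q. is_path V E q \<Longrightarrow> length q \<le> length p"
    using exists_longest_path[OF g \<open>E \<noteq> {}\<close>] by blast
  have "p \<noteq> []" "p ! 0 \<in> set p" using len by (auto intro: nth_mem)
  with p have "2 \<le> deg E (p ! 0)" using mindeg unfolding is_path_def by blast
  then obtain e where e: "e \<in> E" "p ! 0 \<in> e" "e \<noteq> {p ! 0, p ! 1}"
    by (rule two_le_deg_other_edge)
  obtain y where y: "y \<noteq> p ! 0" "e = {p ! 0, y}" "y \<in> V"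
    using graph_edge_other_end[OF g e(1,2)] .
  have "y \<in> set p"
  proof (rule ccontr)
    assume "y \<notin> set p"
    moreover have "{y, hd p} \<in> E"
      using e y \<open>p \<noteq> []\<close> by (simp add: hd_conv_nth insert_commute)
    ultimately have "is_path V E (y # p)"
      using is_path_Cons[OF p \<open>p \<noteq> []\<close> \<open>y \<in> V\<close>] by blast
    then show False using longest by fastforce
  qed
  then obtain j where j: "j < length p" "p ! j = y" by (auto simp: in_set_conv_nth)
  have "j \<noteq> 0" "j \<noteq> 1" using j y e by auto
  then have "2 \<le> j" by linarith
  moreover have "{p ! j, p ! 0} \<in> E" using e y j by (simp add: insert_commute)
  ultimately show ?thesis using is_path_chord_cycle[OF p _ j(1)] by blast
qed

lemma forest_subgraph: "forest V E \<Longrightarrow> V' \<subseteq> V \<Longrightarrow> E' \<subseteq> E \<Longrightarrow> forest V' E'"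
  unfolding forest_def is_cycle_def by blast

lemma graph_del_verts_E: "graph V E \<Longrightarrow> graph (V - F) (del_verts_E E F)"
  unfolding graph_def del_verts_E_def by auto

lemma card_le_card_del_verts_E_plus_deg:
  assumes "finite E" "finite F"
  shows "card E \<le> card (del_verts_E E F) + (\<Sum>v\<in>F. deg E v)"
proof -
  have "E - del_verts_E E F = (\<Union>v\<in>F. {e \<in> E. v \<in> e})" unfolding del_verts_E_def by blast
  then have "card (E - del_verts_E E F) \<le> (\<Sum>v\<in>F. deg E v)"
    unfolding deg_def using card_UN_le[OF assms(2)] by simp
  moreover have "card E = card (del_verts_E E F) + card (E - del_verts_E E F)"
    using card_Int_Diff[OF assms(1), of "del_verts_E E F"]
    unfolding del_verts_E_def by (simp add: Int_absorb1)
  ultimately show ?thesis by linarith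
qed

lemma forest_card_edges_le:
  "graph V E \<Longrightarrow> forest V E \<Longrightarrow> card E \<le> card V"
proof (induction "card V" arbitrary: V E rule: less_induct)
  case less
  show ?case
  proof (cases "E = {}")
    case False
    with less.prems have "\<not> (\<forall>v\<in>V. 2 \<le> deg E v)"
      using min_degree_2_has_cycle unfolding forest_def by blast
    then obtain v where v: "v \<in> V" "deg E v < 2" using not_le by blast
    have finV: "finite V" and finE: "finite E"
      using less.prems graph_finite_edges unfolding graph_def by auto
    have card_V: "Suc (card (V - {v})) = card V" using finV v(1) by (rule card_Suc_Diff1)
    have "graph (V - {v}) (del_verts_E E {v})" using less.prems(1) by (rule graph_del_verts_E)
    moreover have "forest (V - {v}) (del_verts_E E {v})"
      by (rule forest_subgraph[OF less.prems(2)]) (auto simp: del_verts_E_def)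
    moreover have "card (V - {v}) < card V" using card_V by linarith
    ultimately have "card (del_verts_E E {v}) \<le> card (V - {v})"
      using less.hyps by blast
    moreover have "card E \<le> card (del_verts_E E {v}) + deg E v"
      using card_le_card_del_verts_E_plus_deg[OF finE, of "{v}"] by simp
    ultimately show ?thesis using v card_V by linarith
  qed simp
qed

lemma l_forest_card_edges_le:
  assumes "graph V E" "l_forest l V E"
  shows "card E \<le> card V + l"
proof -
  obtain D where D: "D \<subseteq> E" "card D \<le> l" "forest V (E - D)"
    using assms(2) unfolding l_forest_def by blast
  have "graph V (E - D)" using assms(1) unfolding graph_def by blast
  then have "card (E - D) \<le> card V" using D(3) by (rule forest_card_edges_le)
  moreover have "card E \<le> card (E - D) + card D"
    using diff_card_le_card_Diff[of D E] D(1) assms(1) graph_finite_edges finite_subset by fastforce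
  ultimately show ?thesis using D(2) by linarith
qed

lemma l_forest_0_forest: "finite E \<Longrightarrow> l_forest 0 V E \<Longrightarrow> forest V E"
  unfolding l_forest_def using finite_subset by fastforce

lemma riafd_set_card_edges_le:
  assumes g: "graph V E" and F: "riafd_set V E R l F"
  shows "card E + card F \<le> card V + l + (\<Sum>v\<in>F. deg E v)"
proof -
  have FV: "F \<subseteq> V" using F unfolding riafd_set_def by blast
  have finE: "finite E" and finF: "finite F"
    using g FV graph_finite_edges finite_subset unfolding graph_def by blast+
  have "card (del_verts_E E F) \<le> card (V - F) + l"
    using F graph_del_verts_E[OF g] l_forest_card_edges_le unfolding riafd_set_def by blast
  moreover have "card (V - F) + card F = card V"
    using card_Int_Diff[of V F] FV g unfolding graph_def by (simp add: Int_absorb1)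
  ultimately show ?thesis using card_le_card_del_verts_E_plus_deg[OF finE finF] by linarith
qed

lemma riafd_set_0_nonempty:
  assumes "graph V E" "\<forall>v\<in>V. 2 \<le> deg E v" "E \<noteq> {}" "riafd_set V E R 0 F"
  shows "F \<noteq> {}"
proof
  assume "F = {}"
  then have "forest V E"
    using assms(4) l_forest_0_forest[OF graph_finite_edges[OF assms(1)]]
    unfolding riafd_set_def del_verts_E_def by simp
  then show False using min_degree_2_has_cycle[OF assms(1-3)] unfolding forest_def by blast
qed

lemma sum_deg_eq_twice_card_edges:
  assumes g: "graph V E"
  shows "(\<Sum>v\<in>V. deg E v) = 2 * card E"
proof -
  have finV: "finite V" and finE: "finite E"
    using g graph_finite_edges unfolding graph_def by auto
  have "(\<Sum>v\<in>V. deg E v) = (\<Sum>v\<in>V. \<Sum>e\<in>E. if v \<in> e then 1 else 0)"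
    unfolding deg_def using finE by (simp add: sum.inter_filter[symmetric])
  also have "\<dots> = (\<Sum>e\<in>E. \<Sum>v\<in>V. if v \<in> e then 1 else 0)" by (rule sum.swap)
  also have "\<dots> = (\<Sum>e\<in>E. card (V \<inter> e))"
    using finV by (simp add: sum.inter_filter[symmetric] Int_def)
  also have "\<dots> = (\<Sum>e\<in>E. 2)"
    using g unfolding graph_def by (intro sum.cong) (auto simp: Int_absorb1)
  finally show ?thesis by simp
qed

lemma omega_nonneg: "2 \<le> deg E v \<Longrightarrow> 0 \<le> omega E R v"
  unfolding omega_def by simp

lemma sum_omega_le:
  assumes g: "graph V E" and mindeg: "\<forall>v\<in>V. 2 \<le> deg E v"
  shows "(\<Sum>v\<in>V. omega E R v) \<le> 2 * real (card E) - 2 * real (card V)"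
proof -
  have "(\<Sum>v\<in>V. omega E R v) \<le> (\<Sum>v\<in>V. real (deg E v) - 2)"
    using mindeg by (intro sum_mono) (auto simp: omega_def)
  also have "\<dots> = real (\<Sum>v\<in>V. deg E v) - 2 * real (card V)"
    by (simp add: sum_subtractf)
  finally show ?thesis using sum_deg_eq_twice_card_edges[OF g] by simp
qed

lemma sum_omega_disjoint:
  "F \<inter> R = {} \<Longrightarrow> (\<Sum>v\<in>F. omega E R v) = real (\<Sum>v\<in>F. deg E v) - 2 * real (card F)"
  by (subst sum.cong[OF refl, of F _ "\<lambda>v. real (deg E v) - 2"]) (auto simp: omega_def sum_subtractf)

lemma ratio_lower_bound:
  fixes \<epsilon> d k l x y :: real
  assumes "\<epsilon> < 1" "0 < k" "0 \<le> l" "(4 - 2 * \<epsilon>) / (1 - \<epsilon>) * (k + l) \<le> d"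
    and "x = d - 2 * k" "x \<le> y" "y \<le> 2 * d - 2 * k + 2 * l"
  shows "1 / (3 - \<epsilon>) \<le> x / y"
proof -
  have d: "(4 - 2 * \<epsilon>) * (k + l) \<le> (1 - \<epsilon>) * d"
    using assms(1,4) by (simp add: field_simps)
  have x: "(1 - \<epsilon>) * x = (1 - \<epsilon>) * d - 2 * (1 - \<epsilon>) * k"
    unfolding assms(5) by (simp add: algebra_simps)
  have l: "0 \<le> (1 - \<epsilon>) * l" using assms(1,3) by simp
  then have "2 * k \<le> (1 - \<epsilon>) * x" using d x assms(3) by (simp add: algebra_simps)
  then have "0 < (1 - \<epsilon>) * x" using assms(2) by linarith
  then have "0 < x" using assms(1) by (simp add: zero_less_mult_iff)
  have "y \<le> (3 - \<epsilon>) * (d - 2 * k)"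
    using d assms(7) l by (simp add: algebra_simps)
  then have "y \<le> (3 - \<epsilon>) * x" using assms(5) by simp
  then show ?thesis using \<open>0 < x\<close> assms(1,6) by (simp add: field_simps)
qed

theorem lemma22:
  fixes V :: "'a set" and E :: "'a set set" and R F :: "'a set"
    and k l :: nat and \<epsilon> :: real
  assumes "0 < \<epsilon>" and "\<epsilon> < 1"
    and "graph V E"
    and "\<forall>v\<in>V. deg E v \<ge> 2"
    and "\<exists>v\<in>V. deg E v \<ge> 3"
    and "R \<subseteq> V"
    and "riafd_set V E R l F" and "card F = k"
    and "real (\<Sum>v\<in>F. deg E v) \<ge> (4 - 2 * \<epsilon>) / (1 - \<epsilon>) * (real k + real l)"
  shows "(\<Sum>v\<in>F. omega E R v) / (\<Sum>v\<in>V. omega E R v) \<ge> 1 / (3 - \<epsilon>)"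
proof -
  note g = assms(3) and mindeg = assms(4) and F = assms(7)
  have FV: "F \<subseteq> V" "F \<inter> R = {}" using F unfolding riafd_set_def by auto
  have "E \<noteq> {}" using assms(5) unfolding deg_def by auto
  have "0 < k"
  proof (rule ccontr)
    assume "\<not> 0 < k"
    then have "F = {}" using assms(8) FV(1) g finite_subset unfolding graph_def by fastforce
    moreover have "l = 0" using \<open>F = {}\<close> assms(2,8,9) by (simp add: divide_le_0_iff mult_le_0_iff)
    ultimately show False using riafd_set_0_nonempty[OF g mindeg \<open>E \<noteq> {}\<close>] F by blast
  qed
  moreover have "(\<Sum>v\<in>V. omega E R v) \<le> 2 * real (\<Sum>v\<in>F. deg E v) - 2 * real k + 2 * real l"
    using sum_omega_le[OF g mindeg, of R] riafd_set_card_edges_le[OF g F] assms(8) by linarith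
  moreover have "(\<Sum>v\<in>F. omega E R v) \<le> (\<Sum>v\<in>V. omega E R v)"
    using FV(1) mindeg g by (intro sum_mono2) (auto simp: graph_def omega_nonneg)
  ultimately show ?thesis
    using ratio_lower_bound[OF assms(2) _ _ assms(9)] sum_omega_disjoint[OF FV(2)] assms(8) by simp
qed

end
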